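(* Let $X$ be a topological space, $Y$ an Alexandroff space and $f:X\to Y$ a continuous surjection. Then for any join-preserving $\nabla_Y:\mathcal{O}(Y)\to\mathcal{O}(Y)$ and any valuation $V$ of the variables in $\mathcal{O}(Y)$, there exist a join-preserving $\nabla_X:\mathcal{O}(X)\to\mathcal{O}(X)$ and a valuation $U$ of the variables in $\mathcal{O}(X)$ such that for every sequent $\Gamma\Rightarrow A$, $(\mathcal{O}(X),\nabla_X,U)\vDash\Gamma\Rightarrow A$ iff $(\mathcal{O}(Y),\nabla_Y,V)\vDash\Gamma\Rightarrow A$. Moreover, for each class $\mathcal{C}\in\{i\mathbf{ST}(F),i\mathbf{ST}(wF)\}$, if $(\mathcal{O}(Y),\nabla_Y)\in\mathcal{C}$ then $(\mathcal{O}(X),\nabla_X)\in\mathcal{C}$. Consequently, for such $\mathcal{C}$, if $X\vDash_{\mathcal{C}}\Gamma\Rightarrow A$ then $Y\vDash_{\mathcal{C}}\Gamma\Rightarrow A$.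
   Context: $\mathcal{O}(Z)$ is the locale of opens of a space $Z$; a space is Alexandroff if arbitrary intersections of opens are open. Formulas of $\mathcal{L}_\nabla$ are built from variables and constants $1,\top,\bot$ by $\wedge,\vee,\otimes,\to$ and unary $\nabla$; sequents are $\Gamma\Rightarrow A$ with $\Gamma$ a finite sequence. For a join-preserving $\nabla$ on $\mathcal{O}(Z)$ (a spacetime $(\mathcal{O}(Z),\nabla)$), the implication is $W_1\to W_2=\Box(W_1\Rightarrow W_2)$ with $\Box$ the right adjoint of $\nabla$ and $\Rightarrow$ the Heyting implication of $\mathcal{O}(Z)$ (equivalently $W_1\cap\nabla W_2\subseteq W_3$ iff $W_2\subseteq W_1\to W_3$). A valuation of variables extends to all formulas by $1,\top\mapsto Z$, $\bot\mapsto\emptyset$, $\wedge,\otimes\mapsto\cap$, $\vee\mapsto\cup$, $\nabla\mapsto\nabla$, $\to\mapsto\to$; $(\mathcal{O}(Z),\nabla,V)\vDash\gamma_1,\dots,\gamma_n\Rightarrow A$ iff $V(\gamma_1)\cap\dots\cap V(\gamma_n)\subseteq V(A)$ (empty intersection $=Z$). $i\mathbf{ST}(F)$ is the class of such spacetimes with $W\subseteq\nabla W$ for all $W$; $i\mathbf{ST}(wF)$ those with $\nabla W=\emptyset\Rightarrow W=\emptyset$. $Z\vDash_{\mathcal{C}}\Gamma\Rightarrow A$ means $(\mathcal{O}(Z),\nabla,V)\vDash\Gamma\Rightarrow A$ for all $\nabla$ with $(\mathcal{O}(Z),\nabla)\in\mathcal{C}$ and all valuations $V$. *)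

theory Defs
  imports "HOL-Analysis.Analysis"
begin

datatype fm =
    FVar nat
  | FOne
  | FTop
  | FBot
  | FAnd fm fm
  | FOr fm fm
  | FTens fm fm
  | FImp fm fm
  | FNabla fm

type_synonym sequent = "fm list \<times> fm"

definition alexandroff :: "'a topology \<Rightarrow> bool" where
  "alexandroff Z \<longleftrightarrow>
     (\<forall>\<F>. (\<forall>W\<in>\<F>. openin Z W) \<longrightarrow> openin Z (topspace Z \<inter> \<Inter>\<F>))"

definition join_preserving :: "'a topology \<Rightarrow> ('a set \<Rightarrow> 'a set) \<Rightarrow> bool" where
  "join_preserving Z nab \<longleftrightarrow>
     (\<forall>W. openin Z W \<longrightarrow> openin Z (nab W)) \<and>
     (\<forall>\<F>. (\<forall>W\<in>\<F>. openin Z W) \<longrightarrow> nab (\<Union>\<F>) = \<Union>(nab ` \<F>))"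

definition box_op :: "'a topology \<Rightarrow> ('a set \<Rightarrow> 'a set) \<Rightarrow> 'a set \<Rightarrow> 'a set" where
  "box_op Z nab U = \<Union>{W. openin Z W \<and> nab W \<subseteq> U}"

definition heyting_imp :: "'a topology \<Rightarrow> 'a set \<Rightarrow> 'a set \<Rightarrow> 'a set" where
  "heyting_imp Z W1 W2 = \<Union>{W. openin Z W \<and> W \<inter> W1 \<subseteq> W2}"

definition st_imp :: "'a topology \<Rightarrow> ('a set \<Rightarrow> 'a set) \<Rightarrow> 'a set \<Rightarrow> 'a set \<Rightarrow> 'a set" where
  "st_imp Z nab W1 W2 = box_op Z nab (heyting_imp Z W1 W2)"

definition valuation :: "'a topology \<Rightarrow> (nat \<Rightarrow> 'a set) \<Rightarrow> bool" where
  "valuation Z V \<longleftrightarrow> (\<forall>p. openin Z (V p))"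

fun eval :: "'a topology \<Rightarrow> ('a set \<Rightarrow> 'a set) \<Rightarrow> (nat \<Rightarrow> 'a set) \<Rightarrow> fm \<Rightarrow> 'a set" where
  "eval Z nab V (FVar p) = V p"
| "eval Z nab V FOne = topspace Z"
| "eval Z nab V FTop = topspace Z"
| "eval Z nab V FBot = {}"
| "eval Z nab V (FAnd A B) = eval Z nab V A \<inter> eval Z nab V B"
| "eval Z nab V (FOr A B) = eval Z nab V A \<union> eval Z nab V B"
| "eval Z nab V (FTens A B) = eval Z nab V A \<inter> eval Z nab V B"
| "eval Z nab V (FImp A B) = st_imp Z nab (eval Z nab V A) (eval Z nab V B)"
| "eval Z nab V (FNabla A) = nab (eval Z nab V A)"

definition models :: "'a topology \<Rightarrow> ('a set \<Rightarrow> 'a set) \<Rightarrow> (nat \<Rightarrow> 'a set) \<Rightarrow> sequent \<Rightarrow> bool" where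
  "models Z nab V s \<longleftrightarrow>
     foldr (\<lambda>g acc. eval Z nab V g \<inter> acc) (fst s) (topspace Z) \<subseteq> eval Z nab V (snd s)"

definition in_iST_F :: "'a topology \<Rightarrow> ('a set \<Rightarrow> 'a set) \<Rightarrow> bool" where
  "in_iST_F Z nab \<longleftrightarrow> join_preserving Z nab \<and> (\<forall>W. openin Z W \<longrightarrow> W \<subseteq> nab W)"

definition in_iST_wF :: "'a topology \<Rightarrow> ('a set \<Rightarrow> 'a set) \<Rightarrow> bool" where
  "in_iST_wF Z nab \<longleftrightarrow> join_preserving Z nab \<and> (\<forall>W. openin Z W \<longrightarrow> nab W = {} \<longrightarrow> W = {})"

definition valid_in_class ::
  "('a topology \<Rightarrow> ('a set \<Rightarrow> 'a set) \<Rightarrow> bool) \<Rightarrow> 'a topology \<Rightarrow> sequent \<Rightarrow> bool" where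
  "valid_in_class C Z s \<longleftrightarrow> (\<forall>nab V. C Z nab \<longrightarrow> valuation Z V \<longrightarrow> models Z nab V s)"

end

theory Submission
  imports Defs
begin

text \<open>Since f is surjective, taking preimages is an injective frame homomorphism
  \<open>O(Y) \<rightarrow> O(X)\<close>; since Y is Alexandroff, it has a left adjoint sending an open W of X
  to the smallest open set containing \<open>f[W]\<close>. Pull \<open>\<nabla>\<^sub>Y\<close> back to
  \<open>\<nabla>\<^sub>X = f\<inverse> \<circ> \<nabla>\<^sub>Y \<circ> (left adjoint)\<close> and the valuation to \<open>U = f\<inverse> \<circ> V\<close>.
  Then the value of every formula in X is the preimage of its value in Y: for an
  implication \<open>A \<rightarrow> B\<close> both sides are the largest open W with \<open>\<nabla>W \<inter> A \<subseteq> B\<close>, and the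
  adjunction moves this condition between X and Y. Injectivity of the preimage map makes
  the two models validate the same sequents, and the frame conditions F and wF pass
  to \<open>\<nabla>\<^sub>X\<close> because \<open>W \<subseteq> f\<inverse>(hull f[W])\<close>.\<close>

definition preimage_in :: "'a topology \<Rightarrow> ('a \<Rightarrow> 'b) \<Rightarrow> 'b set \<Rightarrow> 'a set" where
  "preimage_in X f S = {x \<in> topspace X. f x \<in> S}"

lemma openin_preimage_in: "continuous_map X Y f \<Longrightarrow> openin Y S \<Longrightarrow> openin X (preimage_in X f S)"
  unfolding preimage_in_def by (rule openin_continuous_map_preimage)

lemma valuation_preimage_in:
  "continuous_map X Y f \<Longrightarrow> valuation Y V \<Longrightarrow> valuation X (preimage_in X f \<circ> V)"
  by (simp add: valuation_def openin_preimage_in)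

lemma preimage_in_Int [simp]: "preimage_in X f (S \<inter> T) = preimage_in X f S \<inter> preimage_in X f T"
  unfolding preimage_in_def by auto

lemma preimage_in_subset_iff:
  assumes "f ` topspace X = topspace Y" and "S \<subseteq> topspace Y"
  shows "preimage_in X f S \<subseteq> preimage_in X f T \<longleftrightarrow> S \<subseteq> T"
proof
  assume pre: "preimage_in X f S \<subseteq> preimage_in X f T"
  show "S \<subseteq> T"
  proof
    fix y assume "y \<in> S"
    then obtain x where "x \<in> topspace X" and "f x = y"
      using assms by (metis imageE subsetD)
    with pre \<open>y \<in> S\<close> show "y \<in> T"
      unfolding preimage_in_def by blast
  qed
qed (auto simp: preimage_in_def)

definition open_hull :: "'a topology \<Rightarrow> 'a set \<Rightarrow> 'a set" where
  "open_hull Z S = topspace Z \<inter> \<Inter>{W. openin Z W \<and> S \<subseteq> W}"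

lemma openin_open_hull: "alexandroff Z \<Longrightarrow> openin Z (open_hull Z S)"
  unfolding alexandroff_def open_hull_def by auto

lemma subset_open_hull: "S \<subseteq> topspace Z \<Longrightarrow> S \<subseteq> open_hull Z S"
  unfolding open_hull_def by auto

lemma open_hull_subset_iff:
  "openin Z G \<Longrightarrow> S \<subseteq> topspace Z \<Longrightarrow> open_hull Z S \<subseteq> G \<longleftrightarrow> S \<subseteq> G"
  unfolding open_hull_def by auto

lemma open_hull_open:
  assumes "openin Z W"
  shows "open_hull Z W = W"
proof (rule subset_antisym)
  show "open_hull Z W \<subseteq> W"
    using open_hull_subset_iff[OF assms openin_subset[OF assms]] by simp
  show "W \<subseteq> open_hull Z W"
    by (rule subset_open_hull[OF openin_subset[OF assms]])
qed

lemma open_hull_Union: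
  assumes "alexandroff Z" and "\<And>S. S \<in> \<F> \<Longrightarrow> S \<subseteq> topspace Z"
  shows "open_hull Z (\<Union>\<F>) = \<Union>(open_hull Z ` \<F>)"
proof
  have "openin Z (\<Union>(open_hull Z ` \<F>))"
    using openin_open_hull[OF assms(1)] by auto
  moreover have "\<Union>\<F> \<subseteq> topspace Z"
    by (rule Union_least[OF assms(2)])
  moreover have "S \<subseteq> open_hull Z S" if "S \<in> \<F>" for S
    using subset_open_hull[OF assms(2)[OF that]] .
  then have "\<Union>\<F> \<subseteq> \<Union>(open_hull Z ` \<F>)"
    by blast
  ultimately show "open_hull Z (\<Union>\<F>) \<subseteq> \<Union>(open_hull Z ` \<F>)"
    by (simp add: open_hull_subset_iff)
  show "\<Union>(open_hull Z ` \<F>) \<subseteq> open_hull Z (\<Union>\<F>)"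
    unfolding open_hull_def by blast
qed

lemma open_hull_image_subset_iff:
  assumes "continuous_map X Y f" and "W \<subseteq> topspace X" and "openin Y G"
  shows "open_hull Y (f ` W) \<subseteq> G \<longleftrightarrow> W \<subseteq> preimage_in X f G"
proof -
  have "f ` W \<subseteq> topspace Y"
    using assms(1,2) continuous_map_image_subset_topspace by blast
  then have "open_hull Y (f ` W) \<subseteq> G \<longleftrightarrow> f ` W \<subseteq> G"
    by (rule open_hull_subset_iff[OF assms(3)])
  also have "\<dots> \<longleftrightarrow> W \<subseteq> preimage_in X f G"
    using assms(2) unfolding preimage_in_def by auto
  finally show ?thesis .
qed

lemma openin_eqI:
  assumes "openin Z A" and "openin Z B" and "\<And>W. openin Z W \<Longrightarrow> W \<subseteq> A \<longleftrightarrow> W \<subseteq> B"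
  shows "A = B"
  using assms by blast

lemma openin_join_preserving: "join_preserving Z nab \<Longrightarrow> openin Z W \<Longrightarrow> openin Z (nab W)"
  unfolding join_preserving_def by simp

lemma join_preserving_Union:
  "join_preserving Z nab \<Longrightarrow> (\<And>W. W \<in> \<F> \<Longrightarrow> openin Z W) \<Longrightarrow> nab (\<Union>\<F>) = \<Union>(nab ` \<F>)"
  unfolding join_preserving_def by simp

lemma join_preserving_mono:
  assumes "join_preserving Z nab" and "openin Z A" and "openin Z B" and "A \<subseteq> B"
  shows "nab A \<subseteq> nab B"
proof -
  have "nab B = nab (\<Union>{A, B})"
    using assms(4) by (simp add: sup.absorb2)
  also have "\<dots> = \<Union>(nab ` {A, B})"
    using assms(2,3) by (intro join_preserving_Union[OF assms(1)]) auto
  finally show ?thesis by blast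
qed

lemma openin_box_op: "openin Z (box_op Z nab U)"
  unfolding box_op_def by (rule openin_Union) blast

lemma subset_box_op_iff:
  assumes "join_preserving Z nab" and "openin Z W"
  shows "W \<subseteq> box_op Z nab U \<longleftrightarrow> nab W \<subseteq> U"
proof
  assume "W \<subseteq> box_op Z nab U"
  then have "nab W \<subseteq> nab (box_op Z nab U)"
    using assms join_preserving_mono openin_box_op by blast
  also have "\<dots> = \<Union>(nab ` {W. openin Z W \<and> nab W \<subseteq> U})"
    unfolding box_op_def by (rule join_preserving_Union[OF assms(1)]) simp
  also have "\<dots> \<subseteq> U"
    by blast
  finally show "nab W \<subseteq> U" .
qed (use assms(2) in \<open>auto simp: box_op_def\<close>)

lemma subset_heyting_imp_iff: "openin Z W \<Longrightarrow> W \<subseteq> heyting_imp Z A B \<longleftrightarrow> W \<inter> A \<subseteq> B"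
  unfolding heyting_imp_def by blast

lemma openin_st_imp: "openin Z (st_imp Z nab A B)"
  unfolding st_imp_def by (rule openin_box_op)

lemma subset_st_imp_iff:
  assumes "join_preserving Z nab" and "openin Z W"
  shows "W \<subseteq> st_imp Z nab A B \<longleftrightarrow> nab W \<inter> A \<subseteq> B"
proof -
  have "openin Z (nab W)"
    by (rule openin_join_preserving[OF assms])
  then show ?thesis
    using assms by (simp add: st_imp_def subset_box_op_iff subset_heyting_imp_iff)
qed

lemma openin_eval:
  assumes "join_preserving Z nab" and "valuation Z V"
  shows "openin Z (eval Z nab V A)"
  using assms
  by (induction A) (auto simp: valuation_def openin_join_preserving openin_st_imp)

lemma valid_in_class_reflect:
  assumes "\<And>nab V. C\<^sub>Y Y nab \<Longrightarrow> valuation Y V \<Longrightarrow>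
             \<exists>nab' U. C\<^sub>X X nab' \<and> valuation X U \<and> (models X nab' U s \<longleftrightarrow> models Y nab V s)"
    and "valid_in_class C\<^sub>X X s"
  shows "valid_in_class C\<^sub>Y Y s"
  using assms unfolding valid_in_class_def by metis

definition pullback_nabla ::
  "'a topology \<Rightarrow> 'b topology \<Rightarrow> ('a \<Rightarrow> 'b) \<Rightarrow> ('b set \<Rightarrow> 'b set) \<Rightarrow> 'a set \<Rightarrow> 'a set" where
  "pullback_nabla X Y f nab W = preimage_in X f (nab (open_hull Y (f ` W)))"

context
  fixes X :: "'a topology" and Y :: "'b topology" and f :: "'a \<Rightarrow> 'b"
    and nab :: "'b set \<Rightarrow> 'b set"
  assumes alex: "alexandroff Y"
    and cont: "continuous_map X Y f"
    and jp: "join_preserving Y nab"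
begin

lemma openin_nab_open_hull: "openin Y (nab (open_hull Y S))"
  by (rule openin_join_preserving[OF jp openin_open_hull[OF alex]])

lemma join_preserving_pullback_nabla: "join_preserving X (pullback_nabla X Y f nab)"
  unfolding join_preserving_def
proof (intro conjI allI impI)
  show "openin X (pullback_nabla X Y f nab W)" for W
    unfolding pullback_nabla_def by (rule openin_preimage_in[OF cont openin_nab_open_hull])
next
  fix \<F> assume opens: "\<forall>W\<in>\<F>. openin X W"
  have "\<And>W. W \<in> \<F> \<Longrightarrow> f ` W \<subseteq> topspace Y"
    using opens openin_subset continuous_map_image_subset_topspace[OF cont] by blast
  then have "open_hull Y (\<Union>((`) f ` \<F>)) = \<Union>(open_hull Y ` (`) f ` \<F>)"
    by (intro open_hull_Union[OF alex]) blast
  then have "open_hull Y (f ` \<Union>\<F>) = \<Union>((\<lambda>W. open_hull Y (f ` W)) ` \<F>)"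
    by (simp add: image_Union image_image)
  moreover have "nab (\<Union>((\<lambda>W. open_hull Y (f ` W)) ` \<F>)) = \<Union>((\<lambda>W. nab (open_hull Y (f ` W))) ` \<F>)"
    using openin_open_hull[OF alex] by (subst join_preserving_Union[OF jp]) (auto simp: image_image)
  ultimately show "pullback_nabla X Y f nab (\<Union>\<F>) = \<Union>(pullback_nabla X Y f nab ` \<F>)"
    unfolding pullback_nabla_def preimage_in_def by auto
qed

lemma in_iST_F_pullback_nabla:
  assumes "in_iST_F Y nab"
  shows "in_iST_F X (pullback_nabla X Y f nab)"
  unfolding in_iST_F_def
proof (intro conjI join_preserving_pullback_nabla allI impI)
  fix W assume "openin X W"
  then have "W \<subseteq> preimage_in X f (open_hull Y (f ` W))"
    using open_hull_image_subset_iff[OF cont] openin_subset openin_open_hull[OF alex] by blast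
  also have "\<dots> \<subseteq> pullback_nabla X Y f nab W"
    using assms openin_open_hull[OF alex]
    unfolding in_iST_F_def pullback_nabla_def preimage_in_def by blast
  finally show "W \<subseteq> pullback_nabla X Y f nab W" .
qed

context
  assumes surj: "f ` topspace X = topspace Y"
begin

lemma pullback_nabla_preimage_in:
  assumes "openin Y G"
  shows "pullback_nabla X Y f nab (preimage_in X f G) = preimage_in X f (nab G)"
proof -
  have "f ` preimage_in X f G = G"
    using surj openin_subset[OF assms] unfolding preimage_in_def by auto
  then show ?thesis
    unfolding pullback_nabla_def by (simp add: open_hull_open[OF assms])
qed

lemma in_iST_wF_pullback_nabla:
  assumes "in_iST_wF Y nab"
  shows "in_iST_wF X (pullback_nabla X Y f nab)"
  unfolding in_iST_wF_def
proof (intro conjI join_preserving_pullback_nabla allI impI)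
  fix W assume "openin X W" and "pullback_nabla X Y f nab W = {}"
  then have "nab (open_hull Y (f ` W)) = {}"
    using preimage_in_subset_iff[OF surj openin_subset[OF openin_nab_open_hull], of _ "{}"]
    unfolding pullback_nabla_def by (simp add: preimage_in_def)
  then have "open_hull Y (f ` W) = {}"
    using assms openin_open_hull[OF alex] unfolding in_iST_wF_def by blast
  then show "W = {}"
    using \<open>openin X W\<close> open_hull_image_subset_iff[OF cont openin_subset, of W "{}"]
    by (simp add: preimage_in_def)
qed

lemma preimage_in_st_imp:
  "preimage_in X f (st_imp Y nab A B)
     = st_imp X (pullback_nabla X Y f nab) (preimage_in X f A) (preimage_in X f B)"
proof (rule openin_eqI)
  show "openin X (preimage_in X f (st_imp Y nab A B))"
    by (rule openin_preimage_in[OF cont openin_st_imp])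
  fix W assume W: "openin X W"
  have "W \<subseteq> preimage_in X f (st_imp Y nab A B)
          \<longleftrightarrow> open_hull Y (f ` W) \<subseteq> st_imp Y nab A B"
    using open_hull_image_subset_iff[OF cont openin_subset[OF W] openin_st_imp] by simp
  also have "\<dots> \<longleftrightarrow> nab (open_hull Y (f ` W)) \<inter> A \<subseteq> B"
    by (rule subset_st_imp_iff[OF jp openin_open_hull[OF alex]])
  also have "\<dots> \<longleftrightarrow> preimage_in X f (nab (open_hull Y (f ` W)) \<inter> A) \<subseteq> preimage_in X f B"
    using openin_subset[OF openin_nab_open_hull]
    by (intro preimage_in_subset_iff[OF surj, symmetric]) auto
  also have "\<dots> \<longleftrightarrow> pullback_nabla X Y f nab W \<inter> preimage_in X f A \<subseteq> preimage_in X f B"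
    by (simp add: pullback_nabla_def)
  also have "\<dots> \<longleftrightarrow> W \<subseteq> st_imp X (pullback_nabla X Y f nab) (preimage_in X f A) (preimage_in X f B)"
    using subset_st_imp_iff[OF join_preserving_pullback_nabla W] by simp
  finally show "W \<subseteq> preimage_in X f (st_imp Y nab A B)
     \<longleftrightarrow> W \<subseteq> st_imp X (pullback_nabla X Y f nab) (preimage_in X f A) (preimage_in X f B)" .
qed (rule openin_st_imp)

lemma eval_pullback:
  assumes "valuation Y V"
  shows "eval X (pullback_nabla X Y f nab) (preimage_in X f \<circ> V) A
           = preimage_in X f (eval Y nab V A)"
proof (induction A)
  case (FNabla A)
  then show ?case
    using pullback_nabla_preimage_in openin_eval[OF jp assms] by simp
next
  case (FImp A B)
  then show ?case
    by (simp add: preimage_in_st_imp)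
qed (use continuous_map_image_subset_topspace[OF cont] in \<open>auto simp: preimage_in_def\<close>)

lemma models_pullback_iff:
  assumes "valuation Y V"
  shows "models X (pullback_nabla X Y f nab) (preimage_in X f \<circ> V) s \<longleftrightarrow> models Y nab V s"
proof -
  let ?ctx = "\<lambda>Z nab V \<Gamma>. foldr (\<lambda>g acc. eval Z nab V g \<inter> acc) \<Gamma> (topspace Z)"
  have "?ctx X (pullback_nabla X Y f nab) (preimage_in X f \<circ> V) \<Gamma>
          = preimage_in X f (?ctx Y nab V \<Gamma>)" for \<Gamma>
    using continuous_map_image_subset_topspace[OF cont]
    by (induction \<Gamma>) (auto simp: eval_pullback[OF assms] preimage_in_def)
  moreover have "?ctx Y nab V \<Gamma> \<subseteq> topspace Y" for \<Gamma>
    by (induction \<Gamma>) auto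
  ultimately show ?thesis
    unfolding models_def by (simp add: eval_pullback[OF assms] preimage_in_subset_iff[OF surj])
qed

end

end

theorem theorem8p10:
  fixes X :: "'a topology" and Y :: "'b topology" and f :: "'a \<Rightarrow> 'b"
  assumes "alexandroff Y"
    and "continuous_map X Y f"
    and "f ` topspace X = topspace Y"
  shows "(\<forall>nabY V. join_preserving Y nabY \<longrightarrow> valuation Y V \<longrightarrow>
            (\<exists>nabX U. join_preserving X nabX \<and> valuation X U \<and>
               (\<forall>s. models X nabX U s \<longleftrightarrow> models Y nabY V s) \<and>
               (in_iST_F Y nabY \<longrightarrow> in_iST_F X nabX) \<and>
               (in_iST_wF Y nabY \<longrightarrow> in_iST_wF X nabX)))
       \<and> (\<forall>s. valid_in_class in_iST_F X s \<longrightarrow> valid_in_class in_iST_F Y s)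
       \<and> (\<forall>s. valid_in_class in_iST_wF X s \<longrightarrow> valid_in_class in_iST_wF Y s)"
proof -
  note pullback = join_preserving_pullback_nabla[OF assms(1,2)]
    in_iST_F_pullback_nabla[OF assms(1,2)] in_iST_wF_pullback_nabla[OF assms(1,2) _ assms(3)]
    models_pullback_iff[OF assms(1,2) _ assms(3)] valuation_preimage_in[OF assms(2)]
  have reflect: "valid_in_class C\<^sub>Y Y s"
    if "valid_in_class C\<^sub>X X s"
      and "\<And>nab. C\<^sub>Y Y nab \<Longrightarrow> join_preserving Y nab \<and> C\<^sub>X X (pullback_nabla X Y f nab)"
    for C\<^sub>X C\<^sub>Y s
  proof (rule valid_in_class_reflect[OF _ that(1)])
    fix nab V assume "C\<^sub>Y Y nab" and "valuation Y V"
    with that(2) show "\<exists>nab' U. C\<^sub>X X nab' \<and> valuation X U \<and> (models X nab' U s \<longleftrightarrow> models Y nab V s)"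
      using pullback(4,5) by blast
  qed
  show ?thesis
  proof (intro conjI allI impI)
    fix s assume "valid_in_class in_iST_F X s"
    then show "valid_in_class in_iST_F Y s"
      by (rule reflect) (use pullback(2) in_iST_F_def in blast)
  next
    fix s assume "valid_in_class in_iST_wF X s"
    then show "valid_in_class in_iST_wF Y s"
      by (rule reflect) (use pullback(3) in_iST_wF_def in blast)
  qed (use pullback in blast)
qed

end
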